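(* Let $n\ge1$, $p$ a prime, $0\le i\le j\le n$, $L_0=(p^2\mathbb Z)^i\times(p\mathbb Z)^{j-i}\times\mathbb Z^{n-j}$, and let $B:\mathbb Z^n\to\mathbb C$ be a function such that $\sum_{A\in H_{i,j}\backslash\mathrm{GL}_n(\mathbb Z)}\sum_{\lambda\in L_0}B({}^tA\lambda)$ converges absolutely. Then \[ \sum_{A\in H_{i,j}\backslash\mathrm{GL}_n(\mathbb Z)}\sum_{\lambda\in L_0}B({}^tA\lambda)=a_0\sum_{\lambda\in\mathbb Z^n}B(\lambda)+a_1\sum_{\lambda\in\mathbb Z^n}B(p\lambda)+a_2\sum_{\lambda\in\mathbb Z^n}B(p^2\lambda), \] where $a_0,a_1,a_2$ are integers with $a_0+a_1+a_2=|H_{i,j}\backslash\mathrm{GL}_n(\mathbb Z)|$, $a_0+a_1=|H_{i,j}\backslash S_i|$ and $a_0=|H_{i,j}\backslash S_{i,j}|$.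
   Context: $\delta_{i,j}=\mathrm{diag}(1_i,p1_{j-i},p^21_{n-j})$; $H_{i,j}=\delta_{i,j}\mathrm{GL}_n(\mathbb Z)\delta_{i,j}^{-1}\cap\mathrm{GL}_n(\mathbb Z)$ acting by left multiplication. $S_i$ is the set of $A\in\mathrm{GL}_n(\mathbb Z)$ such that the first $i$ entries of the last row of $A^{-1}$ are divisible by $p$; $S_{i,j}$ is the set of $A\in\mathrm{GL}_n(\mathbb Z)$ such that in the last row of $A^{-1}$ the first $i$ entries are divisible by $p^2$ and the next $j-i$ are divisible by $p$. *)

theory Defs
  imports "HOL-Analysis.Infinite_Sum" "Jordan_Normal_Form.Matrix"
begin

(* Indices are 0-based: entry k of a vector / matrix row, k < n. *)

definition GLZ :: "nat \<Rightarrow> int mat set" where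
  "GLZ n = {A \<in> carrier_mat n n. invertible_mat A}"

definition delta :: "nat \<Rightarrow> nat \<Rightarrow> nat \<Rightarrow> nat \<Rightarrow> int mat" where
  "delta n p i j = mat n n (\<lambda>(k,l). if k = l then
      (if k < i then 1 else if k < j then int p else int p ^ 2) else 0)"

(* H_{i,j} = delta GL_n(Z) delta^{-1} \<inter> GL_n(Z);
   h \<in> delta GL_n(Z) delta^{-1}  iff  h * delta = delta * g for some g \<in> GL_n(Z) *)
definition Hgrp :: "nat \<Rightarrow> nat \<Rightarrow> nat \<Rightarrow> nat \<Rightarrow> int mat set" where
  "Hgrp n p i j = {h \<in> GLZ n. \<exists>g \<in> GLZ n. h * delta n p i j = delta n p i j * g}"

definition rcos :: "int mat set \<Rightarrow> int mat \<Rightarrow> int mat set" where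
  "rcos H A = (\<lambda>h. h * A) ` H"

definition cosets :: "int mat set \<Rightarrow> int mat set \<Rightarrow> int mat set set" where
  "cosets H X = rcos H ` X"

definition S1 :: "nat \<Rightarrow> nat \<Rightarrow> nat \<Rightarrow> int mat set" where
  "S1 n p i = {A \<in> GLZ n. \<exists>Ainv \<in> carrier_mat n n. A * Ainv = 1\<^sub>m n \<and> Ainv * A = 1\<^sub>m n \<and>
      (\<forall>k < i. int p dvd Ainv $$ (n - 1, k))}"

definition S2 :: "nat \<Rightarrow> nat \<Rightarrow> nat \<Rightarrow> nat \<Rightarrow> int mat set" where
  "S2 n p i j = {A \<in> GLZ n. \<exists>Ainv \<in> carrier_mat n n. A * Ainv = 1\<^sub>m n \<and> Ainv * A = 1\<^sub>m n \<and>
      (\<forall>k < i. int p ^ 2 dvd Ainv $$ (n - 1, k)) \<and>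
      (\<forall>k. i \<le> k \<and> k < j \<longrightarrow> int p dvd Ainv $$ (n - 1, k))}"

definition L0 :: "nat \<Rightarrow> nat \<Rightarrow> nat \<Rightarrow> nat \<Rightarrow> int vec set" where
  "L0 n p i j = {v \<in> carrier_vec n. (\<forall>k < i. int p ^ 2 dvd v $ k) \<and>
      (\<forall>k. i \<le> k \<and> k < j \<longrightarrow> int p dvd v $ k)}"

definition rep :: "int mat set \<Rightarrow> int mat" where
  "rep C = (SOME A. A \<in> C)"

end

theory Submission
  imports Defs "Jordan_Normal_Form.Gauss_Jordan_Elimination" "HOL-Computational_Algebra.Primes"
begin

text \<open>
  Unfolding the inner sums, the left-hand side is $\sum_\mu N(\mu) B(\mu)$, where $N(\mu)$ counts
  the cosets $H_{i,j}A$ with $\mu \in {}^tA L_0$; this is well defined because ${}^tH_{i,j}$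
  preserves $L_0 = \{v : p^2 \mid \delta_{i,j} v\}$, and finitely many cosets occur because
  $H_{i,j}$ contains the principal congruence subgroup of level $p^2$. Replacing $A$ by $A\,{}^tW$
  shows $N(W\mu) = N(\mu)$ for $W \in \mathrm{GL}_n(\mathbb Z)$, and row reduction brings $\mu$ to
  $d e_n$ with $|d|$ the gcd of its entries. Finally $d e_n \in {}^tA L_0$ is a condition on
  $d$ times the last row of $A^{-1}$, so $N(\mu)$ is $|H_{i,j}\backslash S_{i,j}|$,
  $|H_{i,j}\backslash S_i|$ or $|H_{i,j}\backslash\mathrm{GL}_n(\mathbb Z)|$ according as
  $p \nmid d$, $p \parallel d$ or $p^2 \mid d$.
\<close>

subsection \<open>Diagonal matrices and $\delta_{i,j}$\<close>

lemma mult_mat_vec_mat_diag: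
  fixes f :: "nat \<Rightarrow> 'a :: semiring_0"
  assumes "v \<in> carrier_vec n" "k < n"
  shows "(mat_diag n f *\<^sub>v v) $ k = f k * v $ k"
proof -
  have "(mat_diag n f *\<^sub>v v) $ k = (\<Sum>t\<in>{0..<n}. (if t = k then f k else 0) * v $ t)"
    using assms by (auto simp: mat_diag_def scalar_prod_def intro!: sum.cong)
  also have "\<dots> = (\<Sum>t\<in>{0..<n}. if t = k then f k * v $ t else 0)"
    by (rule sum.cong) auto
  finally show ?thesis
    using assms by simp
qed

lemma transpose_mat_diag [simp]: "transpose_mat (mat_diag n f) = mat_diag n f"
  by (rule eq_matI) (auto simp: mat_diag_def)

lemma mat_diag_mult_left_cancel:
  fixes f :: "nat \<Rightarrow> 'a :: idom"
  assumes "M \<in> carrier_mat n m" "N \<in> carrier_mat n m" "\<And>k. k < n \<Longrightarrow> f k \<noteq> 0"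
    and "mat_diag n f * M = mat_diag n f * N"
  shows "M = N"
proof (rule eq_matI)
  fix k l assume "k < dim_row N" "l < dim_col N"
  then show "M $$ (k, l) = N $$ (k, l)"
    using arg_cong[OF assms(4), of "\<lambda>X. X $$ (k, l)"] assms(1-3)
    by (simp add: mat_diag_mult_left)
qed (use assms in auto)

definition delta_entry :: "nat \<Rightarrow> nat \<Rightarrow> nat \<Rightarrow> nat \<Rightarrow> int" where
  "delta_entry p i j k = (if k < i then 1 else if k < j then int p else int p ^ 2)"

lemma delta_eq_mat_diag: "delta n p i j = mat_diag n (delta_entry p i j)"
  by (rule eq_matI) (auto simp: delta_def mat_diag_def delta_entry_def)

lemma delta_carrier [simp]: "delta n p i j \<in> carrier_mat n n"
  by (simp add: delta_def)

lemma transpose_delta [simp]: "transpose_mat (delta n p i j) = delta n p i j"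
  by (simp add: delta_eq_mat_diag)

subsection \<open>The group $\mathrm{GL}_n(\mathbb Z)$\<close>

lemma GLZ_carrier: "A \<in> GLZ n \<Longrightarrow> A \<in> carrier_mat n n"
  by (simp add: GLZ_def)

lemma GLZ_I:
  assumes "A \<in> carrier_mat n n" "Ai \<in> carrier_mat n n" "A * Ai = 1\<^sub>m n" "Ai * A = 1\<^sub>m n"
  shows "A \<in> GLZ n"
  using assms unfolding GLZ_def invertible_mat_def inverts_mat_def
  by (auto intro!: exI[of _ Ai])

lemma GLZ_inverseE:
  assumes "A \<in> GLZ n"
  obtains Ai where "Ai \<in> carrier_mat n n" "A * Ai = 1\<^sub>m n" "Ai * A = 1\<^sub>m n"
proof -
  have A: "A \<in> carrier_mat n n"
    using assms by (rule GLZ_carrier)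
  then obtain Ai where Ai: "A * Ai = 1\<^sub>m n" "Ai * A = 1\<^sub>m (dim_row Ai)"
    using assms unfolding GLZ_def invertible_mat_def inverts_mat_def by auto
  have "dim_row Ai = n" "dim_col Ai = n"
    using arg_cong[OF Ai(2), of dim_col] arg_cong[OF Ai(1), of dim_col] A by auto
  then show ?thesis
    using that Ai by auto
qed

lemma GLZ_inverse:
  assumes "A \<in> carrier_mat n n" "Ai \<in> carrier_mat n n" "A * Ai = 1\<^sub>m n" "Ai * A = 1\<^sub>m n"
  shows "Ai \<in> GLZ n"
  using GLZ_I[OF assms(2,1,4,3)] .

lemma left_inverse_mat_unique:
  fixes A :: "'a :: semiring_1 mat"
  assumes "A \<in> carrier_mat n n" "Ai \<in> carrier_mat n n" "Bi \<in> carrier_mat n n"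
    and "A * Ai = 1\<^sub>m n" "Bi * A = 1\<^sub>m n"
  shows "Bi = Ai"
proof -
  have "Bi = Bi * (A * Ai)"
    using assms by simp
  also have "\<dots> = (Bi * A) * Ai"
    using assoc_mult_mat[OF assms(3,1,2)] by simp
  finally show ?thesis
    using assms by simp
qed

lemma GLZ_mult:
  assumes "A \<in> GLZ n" "B \<in> GLZ n"
  shows "A * B \<in> GLZ n"
proof -
  obtain Ai where Ai: "Ai \<in> carrier_mat n n" "A * Ai = 1\<^sub>m n" "Ai * A = 1\<^sub>m n"
    using assms(1) by (rule GLZ_inverseE)
  obtain Bi where Bi: "Bi \<in> carrier_mat n n" "B * Bi = 1\<^sub>m n" "Bi * B = 1\<^sub>m n"
    using assms(2) by (rule GLZ_inverseE)
  have A: "A \<in> carrier_mat n n" and B: "B \<in> carrier_mat n n"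
    using assms by (auto intro: GLZ_carrier)
  have "(A * B) * (Bi * Ai) = A * ((B * Bi) * Ai)"
    using assoc_mult_mat[OF A B, of "Bi * Ai" n] assoc_mult_mat[OF B Bi(1) Ai(1)] Ai Bi by simp
  then have right_inverse: "(A * B) * (Bi * Ai) = 1\<^sub>m n"
    using Ai Bi by simp
  have "(Bi * Ai) * (A * B) = Bi * ((Ai * A) * B)"
    using assoc_mult_mat[OF Bi(1) Ai(1), of "A * B" n] assoc_mult_mat[OF Ai(1) A B] A B by simp
  then have left_inverse: "(Bi * Ai) * (A * B) = 1\<^sub>m n"
    using B Bi Ai by simp
  show ?thesis
    using GLZ_I[OF _ _ right_inverse left_inverse] A B Ai Bi by simp
qed

lemma one_GLZ: "1\<^sub>m n \<in> GLZ n"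
  by (rule GLZ_I[of _ _ "1\<^sub>m n"]) auto

lemma GLZ_transpose:
  assumes "A \<in> GLZ n"
  shows "transpose_mat A \<in> GLZ n"
proof -
  obtain Ai where Ai: "Ai \<in> carrier_mat n n" "A * Ai = 1\<^sub>m n" "Ai * A = 1\<^sub>m n"
    using assms by (rule GLZ_inverseE)
  have A: "A \<in> carrier_mat n n"
    using assms by (rule GLZ_carrier)
  have "transpose_mat A * transpose_mat Ai = 1\<^sub>m n" "transpose_mat Ai * transpose_mat A = 1\<^sub>m n"
    using transpose_mult[OF Ai(1) A, symmetric] transpose_mult[OF A Ai(1), symmetric] Ai by simp_all
  then show ?thesis
    using A Ai by (intro GLZ_I[of _ n "transpose_mat Ai"]) auto
qed

lemma GLZ_mult_vec_inj:
  assumes "W \<in> GLZ n" "x \<in> carrier_vec n" "y \<in> carrier_vec n" "W *\<^sub>v x = W *\<^sub>v y"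
  shows "x = y"
proof -
  obtain Wi where Wi: "Wi \<in> carrier_mat n n" "W * Wi = 1\<^sub>m n" "Wi * W = 1\<^sub>m n"
    using assms(1) by (rule GLZ_inverseE)
  have W: "W \<in> carrier_mat n n"
    using assms(1) by (rule GLZ_carrier)
  have "(Wi * W) *\<^sub>v x = (Wi * W) *\<^sub>v y"
    using assms(2-4) by (simp add: assoc_mult_mat_vec[OF Wi(1) W])
  then show ?thesis
    using Wi assms(2,3) by simp
qed

subsection \<open>The group $H_{i,j}$ and its right cosets\<close>

lemma Hgrp_GLZ: "h \<in> Hgrp n p i j \<Longrightarrow> h \<in> GLZ n"
  by (simp add: Hgrp_def)

lemma Hgrp_carrier: "h \<in> Hgrp n p i j \<Longrightarrow> h \<in> carrier_mat n n"
  by (simp add: Hgrp_def GLZ_carrier)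

lemma one_Hgrp: "1\<^sub>m n \<in> Hgrp n p i j"
  unfolding Hgrp_def using one_GLZ left_mult_one_mat[OF delta_carrier] right_mult_one_mat[OF delta_carrier]
  by (auto intro!: bexI[of _ "1\<^sub>m n"])

lemma Hgrp_mult:
  assumes "h1 \<in> Hgrp n p i j" "h2 \<in> Hgrp n p i j"
  shows "h1 * h2 \<in> Hgrp n p i j"
proof -
  let ?d = "delta n p i j"
  obtain g1 where g1: "g1 \<in> GLZ n" "h1 * ?d = ?d * g1"
    using assms(1) by (auto simp: Hgrp_def)
  obtain g2 where g2: "g2 \<in> GLZ n" "h2 * ?d = ?d * g2"
    using assms(2) by (auto simp: Hgrp_def)
  have c: "h1 \<in> carrier_mat n n" "h2 \<in> carrier_mat n n" "g1 \<in> carrier_mat n n" "g2 \<in> carrier_mat n n"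
    using assms g1 g2 by (auto intro: Hgrp_carrier GLZ_carrier)
  have d: "?d \<in> carrier_mat n n"
    by simp
  have "h1 * h2 * ?d = h1 * (h2 * ?d)"
    using assoc_mult_mat[OF c(1,2) d] .
  also have "\<dots> = (h1 * ?d) * g2"
    using g2 assoc_mult_mat[OF c(1) d c(4)] by simp
  also have "\<dots> = ?d * (g1 * g2)"
    using g1 assoc_mult_mat[OF d c(3,4)] by simp
  finally show ?thesis
    unfolding Hgrp_def using assms g1 g2 by (auto intro: GLZ_mult Hgrp_GLZ)
qed

lemma Hgrp_inverse:
  assumes "h \<in> Hgrp n p i j" "hi \<in> carrier_mat n n" "h * hi = 1\<^sub>m n" "hi * h = 1\<^sub>m n"
  shows "hi \<in> Hgrp n p i j"
proof -
  let ?d = "delta n p i j"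
  obtain g where g: "g \<in> GLZ n" "h * ?d = ?d * g"
    using assms(1) by (auto simp: Hgrp_def)
  obtain gi where gi: "gi \<in> carrier_mat n n" "g * gi = 1\<^sub>m n" "gi * g = 1\<^sub>m n"
    using g(1) by (rule GLZ_inverseE)
  have c: "h \<in> carrier_mat n n" "g \<in> carrier_mat n n"
    using assms g by (auto intro: Hgrp_carrier GLZ_carrier)
  have d: "?d \<in> carrier_mat n n"
    by simp
  have "?d * gi = (hi * h) * ?d * gi"
    using assms(4) left_mult_one_mat[OF d] by simp
  also have "\<dots> = hi * (h * ?d) * gi"
    using assoc_mult_mat[OF assms(2) c(1) d] by simp
  also have "\<dots> = hi * ?d * (g * gi)"
    using g assoc_mult_mat[OF assms(2) d c(2)] assoc_mult_mat[OF _ c(2) gi(1), of "hi * ?d" n] assms(2) d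
    by simp
  finally have "hi * ?d = ?d * gi"
    using gi assms(2) d by simp
  then show ?thesis
    unfolding Hgrp_def using GLZ_inverse[OF c(2) gi] GLZ_inverse[OF c(1) assms(2-4)] by auto
qed

lemma Hgrp_inverseE:
  assumes "h \<in> Hgrp n p i j"
  obtains hi where "hi \<in> Hgrp n p i j" "hi * h = 1\<^sub>m n"
  using GLZ_inverseE[OF Hgrp_GLZ[OF assms]] Hgrp_inverse[OF assms] by metis

lemma rcos_self: "A \<in> carrier_mat n n \<Longrightarrow> A \<in> rcos (Hgrp n p i j) A"
  unfolding rcos_def using one_Hgrp[of n p i j] by (auto intro!: image_eqI[of _ _ "1\<^sub>m n"])

lemma rcos_GLZ: "A \<in> GLZ n \<Longrightarrow> rcos (Hgrp n p i j) A \<subseteq> GLZ n"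
  unfolding rcos_def by (auto intro: GLZ_mult Hgrp_GLZ)

lemma rcos_eq:
  assumes "A \<in> carrier_mat n n" "B \<in> rcos (Hgrp n p i j) A"
  shows "rcos (Hgrp n p i j) B = rcos (Hgrp n p i j) A"
proof -
  let ?H = "Hgrp n p i j"
  obtain h where h: "h \<in> ?H" "B = h * A"
    using assms(2) by (auto simp: rcos_def)
  obtain hi where hi: "hi \<in> ?H" "hi * h = 1\<^sub>m n"
    using h(1) by (rule Hgrp_inverseE)
  have hc: "h \<in> carrier_mat n n" "hi \<in> carrier_mat n n"
    using h(1) hi(1) by (auto intro: Hgrp_carrier)
  have B_in: "h' * B \<in> rcos ?H A" if "h' \<in> ?H" for h'
    unfolding rcos_def
    by (rule image_eqI[OF _ Hgrp_mult[OF that h(1)]])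
      (use assoc_mult_mat[OF Hgrp_carrier[OF that] hc(1) assms(1)] h(2) in simp)
  have A_in: "h' * A \<in> rcos ?H B" if "h' \<in> ?H" for h'
  proof -
    have "(h' * hi) * B = h' * ((hi * h) * A)"
      using assoc_mult_mat[OF Hgrp_carrier[OF that] hc(2) _, of B n] assoc_mult_mat[OF hc(2,1) assms(1)]
        h(2) hc assms(1) by simp
    then have "h' * A = (h' * hi) * B"
      using hi(2) assms(1) by simp
    then show ?thesis
      unfolding rcos_def by (rule image_eqI[OF _ Hgrp_mult[OF that hi(1)]])
  qed
  have "rcos ?H B \<subseteq> rcos ?H A" "rcos ?H A \<subseteq> rcos ?H B"
    using B_in A_in by (auto simp: rcos_def)
  then show ?thesis
    by (rule equalityI)
qed

lemma rep_in_coset: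
  assumes "X \<subseteq> carrier_mat n n" "C \<in> cosets (Hgrp n p i j) X"
  shows "rep C \<in> C"
proof -
  obtain A where "A \<in> X" "C = rcos (Hgrp n p i j) A"
    using assms(2) by (auto simp: cosets_def)
  then have "A \<in> C"
    using assms(1) rcos_self by blast
  then show ?thesis
    unfolding rep_def by (rule someI)
qed

lemma coset_eq_rcos_rep:
  assumes "X \<subseteq> carrier_mat n n" "C \<in> cosets (Hgrp n p i j) X"
  shows "C = rcos (Hgrp n p i j) (rep C)"
proof -
  obtain A where A: "A \<in> X" "C = rcos (Hgrp n p i j) A"
    using assms(2) by (auto simp: cosets_def)
  show ?thesis
    using rcos_eq[of A n] rep_in_coset[OF assms] A assms(1) by auto
qed

lemma rep_GLZ:
  assumes "C \<in> cosets (Hgrp n p i j) (GLZ n)"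
  shows "rep C \<in> GLZ n"
proof -
  obtain A where "A \<in> GLZ n" "C = rcos (Hgrp n p i j) A"
    using assms by (auto simp: cosets_def)
  then show ?thesis
    using rep_in_coset[OF _ assms] rcos_GLZ GLZ_carrier by blast
qed

lemma cosets_filter_rep:
  assumes "\<And>h A. h \<in> Hgrp n p i j \<Longrightarrow> A \<in> GLZ n \<Longrightarrow> Q (h * A) \<longleftrightarrow> Q A"
  shows "{C \<in> cosets (Hgrp n p i j) (GLZ n). Q (rep C)} = cosets (Hgrp n p i j) {A \<in> GLZ n. Q A}"
proof
  let ?H = "Hgrp n p i j"
  have sub: "GLZ n \<subseteq> carrier_mat n n"
    using GLZ_carrier by blast
  show "{C \<in> cosets ?H (GLZ n). Q (rep C)} \<subseteq> cosets ?H {A \<in> GLZ n. Q A}"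
  proof clarify
    fix C assume C: "C \<in> cosets ?H (GLZ n)" "Q (rep C)"
    then have "rep C \<in> {A \<in> GLZ n. Q A}"
      using rep_GLZ by blast
    then show "C \<in> cosets ?H {A \<in> GLZ n. Q A}"
      unfolding cosets_def using coset_eq_rcos_rep[OF sub C(1)] by (rule rev_image_eqI)
  qed
  show "cosets ?H {A \<in> GLZ n. Q A} \<subseteq> {C \<in> cosets ?H (GLZ n). Q (rep C)}"
  proof clarify
    fix C assume "C \<in> cosets ?H {A \<in> GLZ n. Q A}"
    then obtain A where A: "A \<in> GLZ n" "Q A" "C = rcos ?H A"
      by (auto simp: cosets_def)
    then have C: "C \<in> cosets ?H (GLZ n)"
      by (auto simp: cosets_def)
    obtain h where "h \<in> ?H" "rep C = h * A"
      using rep_in_coset[OF sub C] A(3) by (auto simp: rcos_def)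
    then show "C \<in> cosets ?H (GLZ n) \<and> Q (rep C)"
      using assms A C by auto
  qed
qed

lemma card_cosets_image_mult_right:
  assumes "M \<in> carrier_mat n n" "Mi \<in> carrier_mat n n" "M * Mi = 1\<^sub>m n" "X \<subseteq> carrier_mat n n"
  shows "card (cosets (Hgrp n p i j) ((\<lambda>A. A * M) ` X)) = card (cosets (Hgrp n p i j) X)"
proof -
  let ?H = "Hgrp n p i j"
  let ?mult = "\<lambda>C. (\<lambda>A. A * M) ` C"
  have "rcos ?H (A * M) = ?mult (rcos ?H A)" if "A \<in> carrier_mat n n" for A
    unfolding rcos_def image_image
    using assoc_mult_mat[OF Hgrp_carrier that assms(1)] by (auto intro!: image_cong)
  then have image: "cosets ?H ((\<lambda>A. A * M) ` X) = ?mult ` cosets ?H X"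
    unfolding cosets_def using assms(4) by (auto simp: image_image)
  have undo: "(\<lambda>B. B * Mi) ` ?mult C = C" if "C \<subseteq> carrier_mat n n" for C
  proof -
    have "A * M * Mi = A" if "A \<in> carrier_mat n n" for A
      using assoc_mult_mat[OF that assms(1,2)] assms(3) that by simp
    then have "(\<lambda>A. A * M * Mi) ` C = id ` C"
      using that by (intro image_cong) auto
    then show ?thesis
      by (simp add: image_image)
  qed
  have carrier: "C \<subseteq> carrier_mat n n" if "C \<in> cosets ?H X" for C
    using that assms(4) unfolding cosets_def rcos_def
    by (auto intro: mult_carrier_mat Hgrp_carrier)
  have "inj_on ?mult (cosets ?H X)"
  proof (rule inj_onI)
    fix C D assume "C \<in> cosets ?H X" "D \<in> cosets ?H X" "?mult C = ?mult D"
    then show "C = D"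
      using undo[OF carrier] by metis
  qed
  then show ?thesis
    using image card_image by simp
qed

subsection \<open>Finiteness of $H_{i,j}\backslash\mathrm{GL}_n(\mathbb Z)$\<close>

definition congruent_one_mat :: "nat \<Rightarrow> int \<Rightarrow> int mat \<Rightarrow> bool" where
  "congruent_one_mat n m h \<longleftrightarrow> (\<forall>k<n. \<forall>l<n. m dvd h $$ (k, l) - 1\<^sub>m n $$ (k, l))"

lemma dvd_index_mult_diff_left:
  fixes X Y B :: "'a :: comm_ring_1 mat"
  assumes "X \<in> carrier_mat n n" "Y \<in> carrier_mat n n" "B \<in> carrier_mat n n" "k < n" "l < n"
    and "\<And>t. t < n \<Longrightarrow> m dvd X $$ (k, t) - Y $$ (k, t)"
  shows "m dvd (X * B) $$ (k, l) - (Y * B) $$ (k, l)"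
proof -
  have "(X * B) $$ (k, l) - (Y * B) $$ (k, l) = (\<Sum>t\<in>{0..<n}. (X $$ (k, t) - Y $$ (k, t)) * B $$ (t, l))"
    using assms by (simp add: scalar_prod_def sum_subtractf left_diff_distrib)
  also have "m dvd \<dots>"
    using assms by (auto intro!: dvd_sum)
  finally show ?thesis .
qed

lemma dvd_index_mult_diff_right:
  fixes X Y A :: "'a :: comm_ring_1 mat"
  assumes "X \<in> carrier_mat n n" "Y \<in> carrier_mat n n" "A \<in> carrier_mat n n" "k < n" "l < n"
    and "\<And>t. t < n \<Longrightarrow> m dvd X $$ (t, l) - Y $$ (t, l)"
  shows "m dvd (A * X) $$ (k, l) - (A * Y) $$ (k, l)"
proof -
  have "(A * X) $$ (k, l) - (A * Y) $$ (k, l) = (\<Sum>t\<in>{0..<n}. A $$ (k, t) * (X $$ (t, l) - Y $$ (t, l)))"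
    using assms by (simp add: scalar_prod_def sum_subtractf right_diff_distrib)
  also have "m dvd \<dots>"
    using assms by (auto intro!: dvd_sum)
  finally show ?thesis .
qed

lemma congruent_one_mat_inverse:
  assumes "h \<in> carrier_mat n n" "hi \<in> carrier_mat n n" "hi * h = 1\<^sub>m n" "congruent_one_mat n m h"
  shows "congruent_one_mat n m hi"
  unfolding congruent_one_mat_def
proof (intro allI impI)
  fix k l assume kl: "k < n" "l < n"
  have "m dvd (hi * h) $$ (k, l) - (hi * 1\<^sub>m n) $$ (k, l)"
    by (rule dvd_index_mult_diff_right[of _ n]) (use assms kl in \<open>auto simp: congruent_one_mat_def\<close>)
  then show "m dvd hi $$ (k, l) - 1\<^sub>m n $$ (k, l)"
    using assms kl by (simp add: dvd_diff_commute)
qed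

text \<open>The entries of $\delta_{i,j}^{-1} X \delta_{i,j}$; the division is exact when $X \equiv 1 \pmod{p^2}$.\<close>

definition delta_conj :: "nat \<Rightarrow> nat \<Rightarrow> nat \<Rightarrow> nat \<Rightarrow> int mat \<Rightarrow> int mat" where
  "delta_conj n p i j X =
     mat n n (\<lambda>(k, l). X $$ (k, l) * delta_entry p i j l div delta_entry p i j k)"

lemma mult_delta_eq_delta_mult_conj:
  assumes "X \<in> carrier_mat n n" "congruent_one_mat n (int p ^ 2) X"
  shows "X * delta n p i j = delta n p i j * delta_conj n p i j X"
proof (rule eq_matI)
  let ?f = "delta_entry p i j"
  fix k l assume "k < dim_row (delta n p i j * delta_conj n p i j X)"
    "l < dim_col (delta n p i j * delta_conj n p i j X)"
  then have kl: "k < n" "l < n"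
    by (auto simp: delta_conj_def delta_def)
  have "?f k dvd X $$ (k, l) * ?f l"
  proof (cases "k = l")
    case False
    have "int p ^ 2 dvd X $$ (k, l) - 1\<^sub>m n $$ (k, l)"
      using assms(2) kl unfolding congruent_one_mat_def by blast
    then have "int p ^ 2 dvd X $$ (k, l)"
      using False kl by simp
    moreover have "?f k dvd int p ^ 2"
      by (auto simp: delta_entry_def)
    ultimately show ?thesis
      by (meson dvd_mult2 dvd_trans)
  qed simp
  moreover have "(mat_diag n ?f * delta_conj n p i j X) $$ (k, l) = ?f k * (X $$ (k, l) * ?f l div ?f k)"
    by (subst mat_diag_mult_left[of _ n n]) (use kl in \<open>auto simp: delta_conj_def\<close>)
  ultimately show "(X * delta n p i j) $$ (k, l) = (delta n p i j * delta_conj n p i j X) $$ (k, l)"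
    using kl assms(1) unfolding delta_eq_mat_diag by (simp add: mat_diag_mult_right)
qed (use assms in \<open>auto simp: delta_conj_def delta_def\<close>)

lemma congruent_one_mat_Hgrp:
  assumes "p > 0" "h \<in> GLZ n" "congruent_one_mat n (int p ^ 2) h"
  shows "h \<in> Hgrp n p i j"
proof -
  let ?d = "delta n p i j" and ?g = "delta_conj n p i j"
  have h: "h \<in> carrier_mat n n"
    using assms(2) by (rule GLZ_carrier)
  obtain hi where hi: "hi \<in> carrier_mat n n" "h * hi = 1\<^sub>m n" "hi * h = 1\<^sub>m n"
    using assms(2) by (rule GLZ_inverseE)
  have g: "?g X \<in> carrier_mat n n" for X
    by (simp add: delta_conj_def)
  have e1: "h * ?d = ?d * ?g h"
    using mult_delta_eq_delta_mult_conj[OF h assms(3)] .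
  have e2: "hi * ?d = ?d * ?g hi"
    using mult_delta_eq_delta_mult_conj[OF hi(1) congruent_one_mat_inverse[OF h hi(1,3) assms(3)]] .
  have cancel: "Y = 1\<^sub>m n" if "Y \<in> carrier_mat n n" "?d * Y = ?d" for Y
  proof (rule mat_diag_mult_left_cancel[OF that(1) one_carrier_mat])
    show "delta_entry p i j k \<noteq> 0" for k
      using assms(1) by (simp add: delta_entry_def)
    show "mat_diag n (delta_entry p i j) * Y = mat_diag n (delta_entry p i j) * 1\<^sub>m n"
      using that(2) right_mult_one_mat[OF delta_carrier] by (simp add: delta_eq_mat_diag)
  qed
  have d: "?d \<in> carrier_mat n n"
    by simp
  have "?d * (?g h * ?g hi) = (h * ?d) * ?g hi"
    using e1 assoc_mult_mat[OF d g g] by simp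
  also have "\<dots> = h * (hi * ?d)"
    using e2 assoc_mult_mat[OF h d g] by simp
  finally have "?d * (?g h * ?g hi) = h * hi * ?d"
    using assoc_mult_mat[OF h hi(1) d] by simp
  then have i1: "?g h * ?g hi = 1\<^sub>m n"
    using cancel[OF mult_carrier_mat[OF g g]] hi(2) left_mult_one_mat[OF d] by simp
  have "?d * (?g hi * ?g h) = (hi * ?d) * ?g h"
    using e2 assoc_mult_mat[OF d g g] by simp
  also have "\<dots> = hi * (h * ?d)"
    using e1 assoc_mult_mat[OF hi(1) d g] by simp
  finally have "?d * (?g hi * ?g h) = hi * h * ?d"
    using assoc_mult_mat[OF hi(1) h d] by simp
  then have i2: "?g hi * ?g h = 1\<^sub>m n"
    using cancel[OF mult_carrier_mat[OF g g]] hi(3) left_mult_one_mat[OF d] by simp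
  show ?thesis
    unfolding Hgrp_def using assms(2) e1 GLZ_I[OF g g i1 i2] by auto
qed

lemma rcos_eq_if_congruent:
  assumes "p > 0" "A \<in> GLZ n" "B \<in> GLZ n"
    and "\<And>k l. k < n \<Longrightarrow> l < n \<Longrightarrow> A $$ (k, l) mod int p ^ 2 = B $$ (k, l) mod int p ^ 2"
  shows "rcos (Hgrp n p i j) B = rcos (Hgrp n p i j) A"
proof -
  have A: "A \<in> carrier_mat n n" and B: "B \<in> carrier_mat n n"
    using assms(2,3) by (auto intro: GLZ_carrier)
  obtain Ai where Ai: "Ai \<in> carrier_mat n n" "A * Ai = 1\<^sub>m n" "Ai * A = 1\<^sub>m n"
    using assms(2) by (rule GLZ_inverseE)
  have "congruent_one_mat n (int p ^ 2) (B * Ai)"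
    unfolding congruent_one_mat_def
  proof (intro allI impI)
    fix k l assume kl: "k < n" "l < n"
    have "int p ^ 2 dvd (B * Ai) $$ (k, l) - (A * Ai) $$ (k, l)"
      by (rule dvd_index_mult_diff_left[of _ n])
        (use A B Ai kl assms(4) in \<open>auto simp: mod_eq_dvd_iff dvd_diff_commute\<close>)
    then show "int p ^ 2 dvd (B * Ai) $$ (k, l) - 1\<^sub>m n $$ (k, l)"
      using Ai by simp
  qed
  then have "B * Ai \<in> Hgrp n p i j"
    using congruent_one_mat_Hgrp[OF assms(1) GLZ_mult[OF assms(3) GLZ_inverse[OF A Ai]]] by blast
  moreover have "B = (B * Ai) * A"
    using assoc_mult_mat[OF B Ai(1) A] Ai B by simp
  ultimately have "B \<in> rcos (Hgrp n p i j) A"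
    unfolding rcos_def by (rule rev_image_eqI)
  then show ?thesis
    by (rule rcos_eq[OF A])
qed

lemma finite_cosets_Hgrp:
  assumes "p > 0"
  shows "finite (cosets (Hgrp n p i j) (GLZ n))"
proof -
  let ?T = "cosets (Hgrp n p i j) (GLZ n)" and ?I = "{..<n} \<times> {..<n}"
  define residues where "residues C = (\<lambda>kl \<in> ?I. rep C $$ kl mod int p ^ 2)" for C
  have sub: "GLZ n \<subseteq> carrier_mat n n"
    using GLZ_carrier by blast
  have "inj_on residues ?T"
  proof (rule inj_onI)
    fix C D assume C: "C \<in> ?T" and D: "D \<in> ?T" and eq: "residues C = residues D"
    have "rep C $$ (k, l) mod int p ^ 2 = rep D $$ (k, l) mod int p ^ 2" if "k < n" "l < n" for k l
      using fun_cong[OF eq, of "(k, l)"] that by (simp add: residues_def)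
    then have "rcos (Hgrp n p i j) (rep D) = rcos (Hgrp n p i j) (rep C)"
      using rcos_eq_if_congruent[OF assms rep_GLZ[OF C] rep_GLZ[OF D]] by blast
    then show "C = D"
      using coset_eq_rcos_rep[OF sub C] coset_eq_rcos_rep[OF sub D] by simp
  qed
  moreover have "residues C \<in> PiE ?I (\<lambda>_. {0..<int p ^ 2})" for C
    unfolding residues_def using assms by (intro restrict_PiE_iff[THEN iffD2]) auto
  then have "residues ` ?T \<subseteq> PiE ?I (\<lambda>_. {0..<int p ^ 2})"
    by blast
  then have "finite (residues ` ?T)"
    by (rule finite_subset) (auto intro: finite_PiE)
  ultimately show ?thesis
    by (rule finite_imageD[rotated])
qed

lemma card_cosets_mono:
  assumes "p > 0" "X \<subseteq> Y" "Y \<subseteq> GLZ n"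
  shows "card (cosets (Hgrp n p i j) X) \<le> card (cosets (Hgrp n p i j) Y)"
proof (rule card_mono)
  show "finite (cosets (Hgrp n p i j) Y)"
    using finite_subset[OF image_mono[OF assms(3)] finite_cosets_Hgrp[OF assms(1), unfolded cosets_def]]
    unfolding cosets_def .
  show "cosets (Hgrp n p i j) X \<subseteq> cosets (Hgrp n p i j) Y"
    using assms(2) unfolding cosets_def by blast
qed

subsection \<open>The lattices ${}^tA L_0$\<close>

lemma L0_carrier: "v \<in> L0 n p i j \<Longrightarrow> v \<in> carrier_vec n"
  by (simp add: L0_def)

lemma L0_iff_delta:
  assumes "p > 0" "i \<le> j" "j \<le> n"
  shows "v \<in> L0 n p i j \<longleftrightarrow> v \<in> carrier_vec n \<and> (\<forall>k<n. int p ^ 2 dvd (delta n p i j *\<^sub>v v) $ k)"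
proof -
  have p_dvd: "int p ^ 2 dvd int p * x \<longleftrightarrow> int p dvd x" for x :: int
    using assms(1) by (simp add: power2_eq_square)
  have "v \<in> L0 n p i j \<longleftrightarrow> v \<in> carrier_vec n \<and> (\<forall>k<n. int p ^ 2 dvd delta_entry p i j k * v $ k)"
    unfolding L0_def delta_entry_def using assms(2,3) p_dvd
    by (auto simp: not_less)
  then show ?thesis
    by (auto simp: delta_eq_mat_diag mult_mat_vec_mat_diag)
qed

lemma dvd_index_mult_mat_vec:
  fixes M :: "'a :: comm_semiring_1 mat"
  assumes "M \<in> carrier_mat m n" "w \<in> carrier_vec n" "\<And>k. k < n \<Longrightarrow> c dvd w $ k" "k < m"
  shows "c dvd (M *\<^sub>v w) $ k"
  using assms by (auto simp: scalar_prod_def intro!: dvd_sum)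

lemma transpose_Hgrp_L0:
  assumes "p > 0" "i \<le> j" "j \<le> n" "h \<in> Hgrp n p i j" "v \<in> L0 n p i j"
  shows "transpose_mat h *\<^sub>v v \<in> L0 n p i j"
proof -
  let ?d = "delta n p i j"
  obtain g where g: "g \<in> GLZ n" "h * ?d = ?d * g"
    using assms(4) by (auto simp: Hgrp_def)
  have c: "h \<in> carrier_mat n n" "g \<in> carrier_mat n n" "?d \<in> carrier_mat n n"
    using assms(4) g(1) by (auto intro: Hgrp_carrier GLZ_carrier)
  have v: "v \<in> carrier_vec n" "\<forall>k<n. int p ^ 2 dvd (?d *\<^sub>v v) $ k"
    using L0_iff_delta[OF assms(1-3)] assms(5) by auto
  have "?d * transpose_mat h = transpose_mat g * ?d"
    using arg_cong[OF g(2), of transpose_mat] transpose_mult[OF c(1,3)] transpose_mult[OF c(3,2)] by simp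
  then have "?d *\<^sub>v (transpose_mat h *\<^sub>v v) = transpose_mat g *\<^sub>v (?d *\<^sub>v v)"
    using assoc_mult_mat_vec[OF c(3) _ v(1), of "transpose_mat h"]
      assoc_mult_mat_vec[OF _ c(3) v(1), of "transpose_mat g"] c by simp
  moreover have "int p ^ 2 dvd (transpose_mat g *\<^sub>v (?d *\<^sub>v v)) $ k" if "k < n" for k
  proof -
    have "\<And>k. k < n \<Longrightarrow> int p ^ 2 dvd (?d *\<^sub>v v) $ k"
      using v(2) by blast
    then show ?thesis
      using dvd_index_mult_mat_vec[OF _ mult_mat_vec_carrier[OF c(3) v(1)] _ that] c(2) by simp
  qed
  ultimately have "\<forall>k<n. int p ^ 2 dvd (?d *\<^sub>v (transpose_mat h *\<^sub>v v)) $ k"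
    by metis
  moreover have "transpose_mat h *\<^sub>v v \<in> carrier_vec n"
    using c(1) v(1) by simp
  ultimately show ?thesis
    using L0_iff_delta[OF assms(1-3)] by blast
qed

definition lattice_image :: "nat \<Rightarrow> nat \<Rightarrow> nat \<Rightarrow> nat \<Rightarrow> int mat \<Rightarrow> int vec set" where
  "lattice_image n p i j A = (\<lambda>v. transpose_mat A *\<^sub>v v) ` L0 n p i j"

lemma lattice_image_carrier:
  "A \<in> carrier_mat n n \<Longrightarrow> lattice_image n p i j A \<subseteq> carrier_vec n"
  using L0_carrier by (auto simp: lattice_image_def intro!: mult_mat_vec_carrier[of _ n n])

lemma transpose_mult_mult_vec:
  fixes A B :: "'a :: comm_semiring_0 mat"
  assumes "A \<in> carrier_mat n n" "B \<in> carrier_mat n n" "v \<in> carrier_vec n"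
  shows "transpose_mat (A * B) *\<^sub>v v = transpose_mat B *\<^sub>v (transpose_mat A *\<^sub>v v)"
  using transpose_mult[OF assms(1,2)] assms by simp

lemma lattice_image_Hgrp_mult:
  assumes "p > 0" "i \<le> j" "j \<le> n" "h \<in> Hgrp n p i j" "A \<in> carrier_mat n n"
  shows "lattice_image n p i j (h * A) = lattice_image n p i j A"
proof -
  have h: "h \<in> carrier_mat n n"
    using assms(4) by (rule Hgrp_carrier)
  obtain hi where hi: "hi \<in> Hgrp n p i j" "hi * h = 1\<^sub>m n"
    using assms(4) by (rule Hgrp_inverseE)
  have hi_c: "hi \<in> carrier_mat n n"
    using hi(1) by (rule Hgrp_carrier)
  have "transpose_mat A *\<^sub>v v \<in> lattice_image n p i j (h * A)" if "v \<in> L0 n p i j" for v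
  proof -
    let ?w = "transpose_mat hi *\<^sub>v v"
    have w: "?w \<in> L0 n p i j"
      using transpose_Hgrp_L0[OF assms(1-3) hi(1) that] .
    have "transpose_mat h *\<^sub>v ?w = v"
      using transpose_mult_mult_vec[OF hi_c h L0_carrier[OF that]] hi(2) L0_carrier[OF that] by simp
    then have "transpose_mat (h * A) *\<^sub>v ?w = transpose_mat A *\<^sub>v v"
      using transpose_mult_mult_vec[OF h assms(5) L0_carrier[OF w]] by simp
    then show ?thesis
      unfolding lattice_image_def using w by (metis image_eqI)
  qed
  moreover have "transpose_mat (h * A) *\<^sub>v v \<in> lattice_image n p i j A" if "v \<in> L0 n p i j" for v
    using transpose_mult_mult_vec[OF h assms(5) L0_carrier[OF that]] transpose_Hgrp_L0[OF assms(1-4) that]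
    unfolding lattice_image_def by simp
  ultimately show ?thesis
    unfolding lattice_image_def by blast
qed

lemma mem_lattice_image_iff:
  assumes "A \<in> carrier_mat n n" "Ai \<in> carrier_mat n n" "A * Ai = 1\<^sub>m n" "Ai * A = 1\<^sub>m n"
    and "\<mu> \<in> carrier_vec n"
  shows "\<mu> \<in> lattice_image n p i j A \<longleftrightarrow> transpose_mat Ai *\<^sub>v \<mu> \<in> L0 n p i j"
proof
  assume "\<mu> \<in> lattice_image n p i j A"
  then obtain v where v: "v \<in> L0 n p i j" "\<mu> = transpose_mat A *\<^sub>v v"
    by (auto simp: lattice_image_def)
  then show "transpose_mat Ai *\<^sub>v \<mu> \<in> L0 n p i j"
    using transpose_mult_mult_vec[OF assms(1,2) L0_carrier[OF v(1)]] assms(3) L0_carrier[OF v(1)] by simp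
next
  assume "transpose_mat Ai *\<^sub>v \<mu> \<in> L0 n p i j"
  moreover have "\<mu> = transpose_mat A *\<^sub>v (transpose_mat Ai *\<^sub>v \<mu>)"
    using transpose_mult_mult_vec[OF assms(2,1,5)] assms(4,5) by simp
  ultimately show "\<mu> \<in> lattice_image n p i j A"
    unfolding lattice_image_def by (rule rev_image_eqI)
qed

lemma lattice_image_mult_transpose:
  assumes "A \<in> carrier_mat n n" "W \<in> carrier_mat n n"
  shows "lattice_image n p i j (A * transpose_mat W) = (\<lambda>\<mu>. W *\<^sub>v \<mu>) ` lattice_image n p i j A"
proof -
  have "transpose_mat (A * transpose_mat W) *\<^sub>v v = W *\<^sub>v (transpose_mat A *\<^sub>v v)" if "v \<in> L0 n p i j" for v
    using transpose_mult[OF assms(1), of "transpose_mat W" n] assms L0_carrier[OF that] by simp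
  then show ?thesis
    unfolding lattice_image_def image_image by (rule image_cong[OF refl])
qed

lemma card_cosets_lattice_image_GLZ_mult:
  assumes "W \<in> GLZ n" "\<mu> \<in> carrier_vec n"
  shows "card (cosets (Hgrp n p i j) {A \<in> GLZ n. W *\<^sub>v \<mu> \<in> lattice_image n p i j A})
       = card (cosets (Hgrp n p i j) {A \<in> GLZ n. \<mu> \<in> lattice_image n p i j A})"
proof -
  obtain Wi where Wi: "Wi \<in> carrier_mat n n" "W * Wi = 1\<^sub>m n" "Wi * W = 1\<^sub>m n"
    using assms(1) by (rule GLZ_inverseE)
  have W: "W \<in> carrier_mat n n"
    using assms(1) by (rule GLZ_carrier)
  have WiT: "transpose_mat Wi \<in> GLZ n"
    using GLZ_transpose[OF GLZ_inverse[OF W Wi]] .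
  have TT: "transpose_mat Wi * transpose_mat W = 1\<^sub>m n" "transpose_mat W * transpose_mat Wi = 1\<^sub>m n"
    using Wi by (simp_all add: transpose_mult[OF W Wi(1), symmetric] transpose_mult[OF Wi(1) W, symmetric])
  have mem_iff: "W *\<^sub>v \<mu> \<in> lattice_image n p i j (A * transpose_mat W) \<longleftrightarrow> \<mu> \<in> lattice_image n p i j A"
    if "A \<in> carrier_mat n n" for A
    using lattice_image_mult_transpose[OF that W] lattice_image_carrier[OF that] assms(2)
      GLZ_mult_vec_inj[OF assms(1)] by blast
  have "{A \<in> GLZ n. W *\<^sub>v \<mu> \<in> lattice_image n p i j A}
      = (\<lambda>A. A * transpose_mat W) ` {A \<in> GLZ n. \<mu> \<in> lattice_image n p i j A}"
  proof (intro equalityI subsetI)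
    fix A assume A: "A \<in> {A \<in> GLZ n. W *\<^sub>v \<mu> \<in> lattice_image n p i j A}"
    then have Ac: "A \<in> carrier_mat n n"
      by (auto intro: GLZ_carrier)
    let ?B = "A * transpose_mat Wi"
    have B: "?B \<in> GLZ n"
      using A GLZ_mult[OF _ WiT] by blast
    have BA: "?B * transpose_mat W = A"
      using assoc_mult_mat[OF Ac, of "transpose_mat Wi" n "transpose_mat W" n] TT Ac Wi W by simp
    then have "\<mu> \<in> lattice_image n p i j ?B"
      using mem_iff[OF GLZ_carrier[OF B]] A by simp
    then show "A \<in> (\<lambda>A. A * transpose_mat W) ` {A \<in> GLZ n. \<mu> \<in> lattice_image n p i j A}"
      using B BA by (intro image_eqI[of A _ ?B]) auto
  next
    fix A assume "A \<in> (\<lambda>A. A * transpose_mat W) ` {A \<in> GLZ n. \<mu> \<in> lattice_image n p i j A}"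
    then show "A \<in> {A \<in> GLZ n. W *\<^sub>v \<mu> \<in> lattice_image n p i j A}"
      using mem_iff GLZ_mult[OF _ GLZ_transpose[OF assms(1)]] GLZ_carrier by auto
  qed
  moreover have "{A \<in> GLZ n. \<mu> \<in> lattice_image n p i j A} \<subseteq> carrier_mat n n"
    using GLZ_carrier by blast
  ultimately show ?thesis
    using card_cosets_image_mult_right[of "transpose_mat W" n "transpose_mat Wi", OF _ _ TT(2)] W Wi
    by simp
qed

subsection \<open>Reducing an integer vector to a multiple of the last unit vector\<close>

definition sum_abs_vec :: "nat \<Rightarrow> int vec \<Rightarrow> nat" where
  "sum_abs_vec n v = (\<Sum>t<n. nat \<bar>v $ t\<bar>)"

lemma addrow_mat_mult_vec:
  fixes v :: "'a :: comm_ring_1 vec"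
  assumes "v \<in> carrier_vec n" "a < n" "k < n" "l < n"
  shows "(addrow_mat n c k l *\<^sub>v v) $ a = (if a = k then v $ k + c * v $ l else v $ a)"
  using assms by (auto simp: row_addrow add_scalar_prod_distrib[of _ n])

lemma addrow_mat_GLZ:
  assumes "k < n" "l < n" "k \<noteq> l"
  shows "addrow_mat n c k l \<in> GLZ n"
  using addrow_mat_inv[OF assms, of c] addrow_mat_inv[OF assms, of "- c"]
  by (intro GLZ_I[of _ n "addrow_mat n (- c) k l"]) auto

lemma abs_diff_sgn_mult_less:
  fixes a b :: int
  assumes "a \<noteq> 0" "b \<noteq> 0" "\<bar>b\<bar> \<le> \<bar>a\<bar>"
  shows "\<bar>a - sgn a * sgn b * b\<bar> < \<bar>a\<bar>"
  using assms by (cases "a > 0"; cases "b > 0") (auto simp: sgn_if)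

lemma GLZ_decrease_sum_abs_vec:
  assumes "v \<in> carrier_vec n" "k < n" "l < n" "k \<noteq> l" "v $ k \<noteq> 0" "v $ l \<noteq> 0"
    and "\<bar>v $ l\<bar> \<le> \<bar>v $ k\<bar>"
  shows "\<exists>W\<in>GLZ n. sum_abs_vec n (W *\<^sub>v v) < sum_abs_vec n v"
proof -
  define s where "s = sgn (v $ k) * sgn (v $ l)"
  let ?W = "addrow_mat n (- s) k l"
  have entries: "(?W *\<^sub>v v) $ t = (if t = k then v $ k - s * v $ l else v $ t)" if "t < n" for t
    using addrow_mat_mult_vec[OF assms(1) that assms(2,3)] by simp
  have less: "\<bar>v $ k - s * v $ l\<bar> < \<bar>v $ k\<bar>"
    unfolding s_def using abs_diff_sgn_mult_less[OF assms(5-7)] by simp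
  have "sum_abs_vec n (?W *\<^sub>v v) < sum_abs_vec n v"
    unfolding sum_abs_vec_def
  proof (rule sum_strict_mono_ex1)
    show "\<forall>t\<in>{..<n}. nat \<bar>(?W *\<^sub>v v) $ t\<bar> \<le> nat \<bar>v $ t\<bar>"
      using entries less by auto
    show "\<exists>t\<in>{..<n}. nat \<bar>(?W *\<^sub>v v) $ t\<bar> < nat \<bar>v $ t\<bar>"
      using entries less assms(2) by (intro bexI[of _ k]) auto
  qed simp
  then show ?thesis
    using addrow_mat_GLZ[OF assms(2-4)] by blast
qed

lemma GLZ_single_entry_to_last:
  assumes "v \<in> carrier_vec n" "k < n" "\<And>t. t < n \<Longrightarrow> t \<noteq> k \<Longrightarrow> v $ t = 0"
  shows "\<exists>W\<in>GLZ n. W *\<^sub>v v = v $ k \<cdot>\<^sub>v unit_vec n (n - 1)"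
proof (cases "k = n - 1")
  case True
  have "1\<^sub>m n *\<^sub>v v = v $ k \<cdot>\<^sub>v unit_vec n (n - 1)"
    by (rule eq_vecI) (use assms True in auto)
  then show ?thesis
    using one_GLZ by blast
next
  case False
  have last: "n - 1 < n"
    using assms(2) by simp
  let ?W = "addrow_mat n (- 1) k (n - 1) * addrow_mat n 1 (n - 1) k"
  define w where "w = addrow_mat n 1 (n - 1) k *\<^sub>v v"
  have w: "w \<in> carrier_vec n"
    unfolding w_def using mult_mat_vec_carrier[OF addrow_mat_carrier assms(1)] .
  have w_entries: "w $ t = (if t = n - 1 then v $ k else v $ t)" if "t < n" for t
    unfolding w_def using addrow_mat_mult_vec[OF assms(1) that last assms(2)] assms(3)[OF last] False
    by auto
  have "(addrow_mat n (- 1) k (n - 1) *\<^sub>v w) $ t = (v $ k \<cdot>\<^sub>v unit_vec n (n - 1)) $ t"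
    if "t < n" for t
    using addrow_mat_mult_vec[OF w that assms(2) last] w_entries[OF that] w_entries[OF last]
      w_entries[OF assms(2)] assms(3)[OF that] False that by auto
  then have "addrow_mat n (- 1) k (n - 1) *\<^sub>v w = v $ k \<cdot>\<^sub>v unit_vec n (n - 1)"
    using w by (intro eq_vecI) auto
  then have "?W *\<^sub>v v = v $ k \<cdot>\<^sub>v unit_vec n (n - 1)"
    unfolding w_def using assoc_mult_mat_vec[OF addrow_mat_carrier addrow_mat_carrier assms(1)] by simp
  moreover have "?W \<in> GLZ n"
    using GLZ_mult[OF addrow_mat_GLZ addrow_mat_GLZ] assms(2) last False by simp
  ultimately show ?thesis
    by blast
qed

text \<open>Euclid's algorithm on the entries: while two entries are nonzero, subtracting a signed copy of
  the smaller from the larger decreases the sum of absolute values.\<close>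

lemma GLZ_reduce_to_last_unit_vec:
  assumes "n \<ge> 1" "v \<in> carrier_vec n"
  shows "\<exists>W\<in>GLZ n. \<exists>d. W *\<^sub>v v = d \<cdot>\<^sub>v unit_vec n (n - 1)"
  using assms(2)
proof (induction "sum_abs_vec n v" arbitrary: v rule: less_induct)
  case less
  show ?case
  proof (cases "\<exists>k<n. \<exists>l<n. k \<noteq> l \<and> v $ k \<noteq> 0 \<and> v $ l \<noteq> 0")
    case True
    then obtain k l where kl: "k < n" "l < n" "k \<noteq> l" "v $ k \<noteq> 0" "v $ l \<noteq> 0" "\<bar>v $ l\<bar> \<le> \<bar>v $ k\<bar>"
      by (metis linorder_le_cases)
    obtain W where W: "W \<in> GLZ n" "sum_abs_vec n (W *\<^sub>v v) < sum_abs_vec n v"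
      using GLZ_decrease_sum_abs_vec[OF less.prems kl] by blast
    moreover have "W *\<^sub>v v \<in> carrier_vec n"
      using mult_mat_vec_carrier[OF GLZ_carrier[OF W(1)] less.prems] .
    ultimately obtain W' d where W': "W' \<in> GLZ n" "W' *\<^sub>v (W *\<^sub>v v) = d \<cdot>\<^sub>v unit_vec n (n - 1)"
      using less.hyps by blast
    then have "(W' * W) *\<^sub>v v = d \<cdot>\<^sub>v unit_vec n (n - 1)"
      using assoc_mult_mat_vec[OF GLZ_carrier[OF W'(1)] GLZ_carrier[OF W(1)] less.prems] by simp
    then show ?thesis
      using GLZ_mult[OF W'(1) W(1)] by blast
  next
    case False
    obtain k where "k < n" "\<And>t. t < n \<Longrightarrow> t \<noteq> k \<Longrightarrow> v $ t = 0"
    proof (cases "\<exists>k<n. v $ k \<noteq> 0")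
      case True
      then show ?thesis
        using False that by blast
    next
      case False
      then show ?thesis
        using that[of "n - 1"] assms(1) by auto
    qed
    then show ?thesis
      using GLZ_single_entry_to_last[OF less.prems] by blast
  qed
qed

lemma dvd_entries_GLZ_mult_vec_iff:
  assumes "W \<in> GLZ n" "v \<in> carrier_vec n"
  shows "(\<forall>k<n. m dvd (W *\<^sub>v v) $ k) \<longleftrightarrow> (\<forall>k<n. m dvd v $ k)"
proof -
  obtain Wi where Wi: "Wi \<in> carrier_mat n n" "W * Wi = 1\<^sub>m n" "Wi * W = 1\<^sub>m n"
    using assms(1) by (rule GLZ_inverseE)
  have W: "W \<in> carrier_mat n n"
    using assms(1) by (rule GLZ_carrier)
  have "v = Wi *\<^sub>v (W *\<^sub>v v)"
    using assoc_mult_mat_vec[OF Wi(1) W assms(2)] Wi(3) assms(2) by simp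
  then show ?thesis
    using dvd_index_mult_mat_vec[OF W assms(2)] dvd_index_mult_mat_vec[OF Wi(1), of "W *\<^sub>v v"] W assms(2)
    by (metis mult_mat_vec_carrier)
qed

subsection \<open>Counting the cosets whose lattice contains a given vector\<close>

lemma prime_power2_dvd_mult_iff_not_dvd:
  fixes q d x :: int
  assumes "prime q" "\<not> q dvd d"
  shows "q ^ 2 dvd d * x \<longleftrightarrow> q ^ 2 dvd x"
  using assms by (simp add: prime_imp_coprime coprime_dvd_mult_right_iff)

lemma prime_power2_dvd_mult_iff_exact_dvd:
  fixes q d x :: int
  assumes "prime q" "q dvd d" "\<not> q ^ 2 dvd d"
  shows "q ^ 2 dvd d * x \<longleftrightarrow> q dvd x"
proof -
  obtain e where e: "d = q * e"
    using assms(2) by blast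
  then have "\<not> q dvd e"
    using assms(3) by (auto simp: power2_eq_square)
  have "q ^ 2 dvd d * x \<longleftrightarrow> q dvd e * x"
    using e assms(1) by (auto simp: power2_eq_square mult.assoc prime_gt_0_int)
  also have "\<dots> \<longleftrightarrow> q dvd x"
    using \<open>\<not> q dvd e\<close> assms(1) by (simp add: prime_dvd_mult_iff)
  finally show ?thesis .
qed

lemma index_transpose_mult_smult_unit_vec:
  fixes M :: "'a :: comm_semiring_1 mat"
  assumes "M \<in> carrier_mat n n" "r < n" "k < n"
  shows "(transpose_mat M *\<^sub>v (d \<cdot>\<^sub>v unit_vec n r)) $ k = d * M $$ (r, k)"
  using assms by (simp add: mult.commute)

lemma S2_subset_S1: "S2 n p i j \<subseteq> S1 n p i"
  unfolding S1_def S2_def by (auto simp: power2_eq_square) (meson dvd_mult_left)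

lemma S1_subset_GLZ: "S1 n p i \<subseteq> GLZ n"
  by (auto simp: S1_def)

lemma S1_iff_inverse:
  assumes "A \<in> GLZ n" "Ai \<in> carrier_mat n n" "A * Ai = 1\<^sub>m n" "Ai * A = 1\<^sub>m n"
  shows "A \<in> S1 n p i \<longleftrightarrow> (\<forall>k<i. int p dvd Ai $$ (n - 1, k))"
  using left_inverse_mat_unique[OF GLZ_carrier[OF assms(1)] assms(2) _ assms(3)] assms
  unfolding S1_def by blast

lemma S2_iff_inverse:
  assumes "A \<in> GLZ n" "Ai \<in> carrier_mat n n" "A * Ai = 1\<^sub>m n" "Ai * A = 1\<^sub>m n"
  shows "A \<in> S2 n p i j \<longleftrightarrow> (\<forall>k<i. int p ^ 2 dvd Ai $$ (n - 1, k)) \<and>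
      (\<forall>k. i \<le> k \<and> k < j \<longrightarrow> int p dvd Ai $$ (n - 1, k))"
  using left_inverse_mat_unique[OF GLZ_carrier[OF assms(1)] assms(2) _ assms(3)] assms
  unfolding S2_def by blast

lemma smult_unit_mem_lattice_image_iff:
  assumes "A \<in> carrier_mat n n" "Ai \<in> carrier_mat n n" "A * Ai = 1\<^sub>m n" "Ai * A = 1\<^sub>m n"
    and "n \<ge> 1" "i \<le> j" "j \<le> n"
  shows "d \<cdot>\<^sub>v unit_vec n (n - 1) \<in> lattice_image n p i j A \<longleftrightarrow>
     (\<forall>k<i. int p ^ 2 dvd d * Ai $$ (n - 1, k)) \<and> (\<forall>k. i \<le> k \<and> k < j \<longrightarrow> int p dvd d * Ai $$ (n - 1, k))"
  unfolding mem_lattice_image_iff[OF assms(1-4) smult_carrier_vec[THEN iffD2, OF unit_vec_carrier]] L0_def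
  using index_transpose_mult_smult_unit_vec[OF assms(2), of "n - 1" _ d] assms(2,5-7) by auto

lemma GLZ_lattice_image_smult_unit:
  assumes "prime p" "n \<ge> 1" "i \<le> j" "j \<le> n"
  shows "{A \<in> GLZ n. d \<cdot>\<^sub>v unit_vec n (n - 1) \<in> lattice_image n p i j A} =
    (if int p ^ 2 dvd d then GLZ n else if int p dvd d then S1 n p i else S2 n p i j)"
proof -
  have prime: "prime (int p)"
    using assms(1) by simp
  have "d \<cdot>\<^sub>v unit_vec n (n - 1) \<in> lattice_image n p i j A \<longleftrightarrow>
      A \<in> (if int p ^ 2 dvd d then GLZ n else if int p dvd d then S1 n p i else S2 n p i j)"
    if A: "A \<in> GLZ n" for A
  proof -
    obtain Ai where Ai: "Ai \<in> carrier_mat n n" "A * Ai = 1\<^sub>m n" "Ai * A = 1\<^sub>m n"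
      using A by (rule GLZ_inverseE)
    note mem_iff = smult_unit_mem_lattice_image_iff[OF GLZ_carrier[OF A] Ai assms(2-4)]
    show ?thesis
    proof (cases "int p ^ 2 dvd d")
      case True
      then have "int p dvd d"
        by (simp add: power2_eq_square dvd_mult_left)
      then show ?thesis
        unfolding mem_iff using True A by (simp add: dvd_mult2)
    next
      case not_sq: False
      show ?thesis
      proof (cases "int p dvd d")
        case True
        then show ?thesis
          unfolding mem_iff using not_sq
          by (simp add: dvd_mult2 prime_power2_dvd_mult_iff_exact_dvd[OF prime True not_sq]
            S1_iff_inverse[OF A Ai])
      next
        case False
        then show ?thesis
          unfolding mem_iff using not_sq
          by (simp add: prime_power2_dvd_mult_iff_not_dvd[OF prime False] prime_dvd_mult_iff[OF prime]
            S2_iff_inverse[OF A Ai])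
      qed
    qed
  qed
  then show ?thesis
    using S2_subset_S1[of n p i j] S1_subset_GLZ[of n p i] by auto
qed

lemma card_cosets_lattice_image_containing:
  assumes "prime p" "n \<ge> 1" "i \<le> j" "j \<le> n" "\<mu> \<in> carrier_vec n"
  shows "card {C \<in> cosets (Hgrp n p i j) (GLZ n). \<mu> \<in> lattice_image n p i j (rep C)} =
    card (cosets (Hgrp n p i j)
      (if \<forall>k<n. int p ^ 2 dvd \<mu> $ k then GLZ n
       else if \<forall>k<n. int p dvd \<mu> $ k then S1 n p i else S2 n p i j))"
proof -
  have p: "p > 0"
    using assms(1) prime_gt_0_nat by blast
  obtain W d where W: "W \<in> GLZ n" "W *\<^sub>v \<mu> = d \<cdot>\<^sub>v unit_vec n (n - 1)"
    using GLZ_reduce_to_last_unit_vec[OF assms(2,5)] by blast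
  have dvd_iff: "(\<forall>k<n. m dvd \<mu> $ k) \<longleftrightarrow> m dvd d" for m :: int
    using dvd_entries_GLZ_mult_vec_iff[OF W(1) assms(5), of m] W(2) assms(2)
    by (auto dest: spec[of _ "n - 1"])
  have "{C \<in> cosets (Hgrp n p i j) (GLZ n). \<mu> \<in> lattice_image n p i j (rep C)}
      = cosets (Hgrp n p i j) {A \<in> GLZ n. \<mu> \<in> lattice_image n p i j A}"
    by (rule cosets_filter_rep) (use lattice_image_Hgrp_mult[OF p assms(3,4)] GLZ_carrier in simp)
  then show ?thesis
    using card_cosets_lattice_image_GLZ_mult[OF W(1) assms(5), of p i j]
    unfolding W(2) GLZ_lattice_image_smult_unit[OF assms(1-4)] dvd_iff by simp
qed

subsection \<open>Unfolding the lattice sums\<close>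

lemma has_sum_sum:
  fixes f :: "'i \<Rightarrow> 'a \<Rightarrow> 'b :: topological_comm_monoid_add"
  assumes "finite I" "\<And>i. i \<in> I \<Longrightarrow> (f i has_sum s i) A"
  shows "((\<lambda>x. \<Sum>i\<in>I. f i x) has_sum (\<Sum>i\<in>I. s i)) A"
  using assms by (induction I rule: finite_induct) (auto intro: has_sum_add)

lemma has_sum_extend_image:
  fixes g :: "'b \<Rightarrow> 'c :: {comm_monoid_add, t2_space}"
  assumes "inj_on \<phi> L" "\<phi> ` L \<subseteq> V" "(\<lambda>v. g (\<phi> v)) summable_on L"
  shows "((\<lambda>\<mu>. if \<mu> \<in> \<phi> ` L then g \<mu> else 0) has_sum (\<Sum>\<^sub>\<infinity>v\<in>L. g (\<phi> v))) V"
proof -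
  have "(g has_sum (\<Sum>\<^sub>\<infinity>v\<in>L. g (\<phi> v))) (\<phi> ` L)"
    using has_sum_reindex[OF assms(1), of g] has_sum_infsum[OF assms(3)] by (simp add: comp_def)
  then show ?thesis
    by (rule has_sum_cong_neutral[THEN iffD1, rotated -1]) (use assms(2) in auto)
qed

lemma sum_infsum_eq_infsum_count:
  fixes B :: "'b \<Rightarrow> 'c :: {banach, real_normed_div_algebra}"
  assumes "finite T"
    and "\<And>C. C \<in> T \<Longrightarrow> inj_on (\<phi> C) L" "\<And>C. C \<in> T \<Longrightarrow> \<phi> C ` L \<subseteq> V"
    and "\<And>C. C \<in> T \<Longrightarrow> (\<lambda>v. B (\<phi> C v)) abs_summable_on L"
  shows "(\<lambda>\<mu>. of_nat (card {C \<in> T. \<mu> \<in> \<phi> C ` L}) * B \<mu>) abs_summable_on V"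
    and "(\<Sum>C\<in>T. \<Sum>\<^sub>\<infinity>v\<in>L. B (\<phi> C v)) = (\<Sum>\<^sub>\<infinity>\<mu>\<in>V. of_nat (card {C \<in> T. \<mu> \<in> \<phi> C ` L}) * B \<mu>)"
proof -
  define f where "f C \<mu> = (if \<mu> \<in> \<phi> C ` L then B \<mu> else 0)" for C \<mu>
  have count: "(\<Sum>C\<in>T. f C \<mu>) = of_nat (card {C \<in> T. \<mu> \<in> \<phi> C ` L}) * B \<mu>" for \<mu>
    unfolding f_def using sum.inter_filter[OF assms(1), of "\<lambda>_. B \<mu>"] by simp
  have norm_count: "(\<Sum>C\<in>T. norm (f C \<mu>)) = norm (of_nat (card {C \<in> T. \<mu> \<in> \<phi> C ` L}) * B \<mu>)" for \<mu>
  proof -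
    have "(\<Sum>C\<in>T. norm (f C \<mu>)) = (\<Sum>C\<in>T. if \<mu> \<in> \<phi> C ` L then norm (B \<mu>) else 0)"
      unfolding f_def by (intro sum.cong) auto
    then show ?thesis
      using sum.inter_filter[OF assms(1), of "\<lambda>_. norm (B \<mu>)"] by (simp add: norm_mult)
  qed
  have norm_has_sum: "((\<lambda>\<mu>. norm (f C \<mu>)) has_sum (\<Sum>\<^sub>\<infinity>v\<in>L. norm (B (\<phi> C v)))) V" if "C \<in> T" for C
  proof -
    have "(\<lambda>\<mu>. norm (f C \<mu>)) = (\<lambda>\<mu>. if \<mu> \<in> \<phi> C ` L then norm (B \<mu>) else 0)"
      unfolding f_def by auto
    then show ?thesis
      using has_sum_extend_image[OF assms(2,3)[OF that], of "\<lambda>\<mu>. norm (B \<mu>)"] assms(4)[OF that] by simp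
  qed
  have "((\<lambda>\<mu>. \<Sum>C\<in>T. norm (f C \<mu>)) has_sum (\<Sum>C\<in>T. \<Sum>\<^sub>\<infinity>v\<in>L. norm (B (\<phi> C v)))) V"
    by (rule has_sum_sum[OF assms(1) norm_has_sum])
  then show "(\<lambda>\<mu>. of_nat (card {C \<in> T. \<mu> \<in> \<phi> C ` L}) * B \<mu>) abs_summable_on V"
    unfolding norm_count by (rule has_sum_imp_summable)
  have f_has_sum: "(f C has_sum (\<Sum>\<^sub>\<infinity>v\<in>L. B (\<phi> C v))) V" if "C \<in> T" for C
    unfolding f_def
    by (rule has_sum_extend_image[OF assms(2,3)[OF that] abs_summable_summable[OF assms(4)[OF that]]])
  have "((\<lambda>\<mu>. \<Sum>C\<in>T. f C \<mu>) has_sum (\<Sum>C\<in>T. \<Sum>\<^sub>\<infinity>v\<in>L. B (\<phi> C v))) V"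
    by (rule has_sum_sum[OF assms(1) f_has_sum])
  then show "(\<Sum>C\<in>T. \<Sum>\<^sub>\<infinity>v\<in>L. B (\<phi> C v)) = (\<Sum>\<^sub>\<infinity>\<mu>\<in>V. of_nat (card {C \<in> T. \<mu> \<in> \<phi> C ` L}) * B \<mu>)"
    unfolding count by (simp add: infsumI)
qed

lemma infsum_add_nonneg_weights:
  fixes f :: "'a \<Rightarrow> 'c :: {banach, real_normed_div_algebra}"
  assumes "(\<lambda>x. of_int (a x + b x) * f x) abs_summable_on A"
    and "\<And>x. x \<in> A \<Longrightarrow> 0 \<le> a x" "\<And>x. x \<in> A \<Longrightarrow> 0 \<le> b x"
  shows "(\<lambda>x. of_int (a x) * f x) abs_summable_on A"
    and "(\<Sum>\<^sub>\<infinity>x\<in>A. of_int (a x + b x) * f x) = (\<Sum>\<^sub>\<infinity>x\<in>A. of_int (a x) * f x) + (\<Sum>\<^sub>\<infinity>x\<in>A. of_int (b x) * f x)"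
proof -
  have dominated: "norm (of_int (c x) * f x) \<le> norm (of_int (a x + b x) * f x)"
    if "x \<in> A" "0 \<le> c x" "c x \<le> a x + b x" for c x
    using that by (simp add: norm_mult mult_right_mono del: of_int_add)
  show a: "(\<lambda>x. of_int (a x) * f x) abs_summable_on A"
    by (rule abs_summable_on_comparison_test'[OF assms(1)]) (use dominated assms(2,3) in auto)
  have b: "(\<lambda>x. of_int (b x) * f x) abs_summable_on A"
    by (rule abs_summable_on_comparison_test'[OF assms(1)]) (use dominated assms(2,3) in auto)
  show "(\<Sum>\<^sub>\<infinity>x\<in>A. of_int (a x + b x) * f x) = (\<Sum>\<^sub>\<infinity>x\<in>A. of_int (a x) * f x) + (\<Sum>\<^sub>\<infinity>x\<in>A. of_int (b x) * f x)"
    using infsum_add[OF abs_summable_summable[OF a] abs_summable_summable[OF b]]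
    by (simp add: distrib_right)
qed

lemma infsum_smult_vec:
  fixes B :: "int vec \<Rightarrow> 'c :: {comm_monoid_add, t2_space}"
  assumes "q \<noteq> 0"
  shows "(\<Sum>\<^sub>\<infinity>v\<in>carrier_vec n. B (q \<cdot>\<^sub>v v)) = (\<Sum>\<^sub>\<infinity>\<mu>\<in>carrier_vec n. if \<forall>k<n. q dvd \<mu> $ k then B \<mu> else 0)"
proof -
  have "inj_on (\<lambda>v. q \<cdot>\<^sub>v v) (carrier_vec n)"
    using assms by (intro inj_onI)
      (metis (no_types, lifting) carrier_vecD eq_vecI index_smult_vec(1,2) mult_cancel_left)
  moreover have "(\<lambda>v. q \<cdot>\<^sub>v v) ` carrier_vec n = {\<mu> \<in> carrier_vec n. \<forall>k<n. q dvd \<mu> $ k}"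
  proof (intro equalityI subsetI)
    fix \<mu> assume "\<mu> \<in> {\<mu> \<in> carrier_vec n. \<forall>k<n. q dvd \<mu> $ k}"
    then have "\<mu> = q \<cdot>\<^sub>v vec n (\<lambda>k. \<mu> $ k div q)"
      by (intro eq_vecI) auto
    then show "\<mu> \<in> (\<lambda>v. q \<cdot>\<^sub>v v) ` carrier_vec n"
      by (rule image_eqI) simp
  qed auto
  ultimately have "(\<Sum>\<^sub>\<infinity>v\<in>carrier_vec n. B (q \<cdot>\<^sub>v v)) = infsum B {\<mu> \<in> carrier_vec n. \<forall>k<n. q dvd \<mu> $ k}"
    using infsum_reindex[of "\<lambda>v. q \<cdot>\<^sub>v v" "carrier_vec n" B] by (simp add: comp_def)
  also have "\<dots> = (\<Sum>\<^sub>\<infinity>\<mu>\<in>carrier_vec n. if \<forall>k<n. q dvd \<mu> $ k then B \<mu> else 0)"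
    by (rule infsum_cong_neutral) auto
  finally show ?thesis .
qed

lemma infsum_of_bool_weight:
  fixes f :: "'a \<Rightarrow> 'c :: {banach, real_normed_div_algebra}"
  shows "(\<Sum>\<^sub>\<infinity>x\<in>A. of_int a * of_bool (P x) * f x) = of_int a * (\<Sum>\<^sub>\<infinity>x\<in>A. if P x then f x else 0)"
  by (subst infsum_cmult_right'[symmetric]) (auto intro: infsum_cong)

lemma infsum_divisibility_weights:
  fixes B :: "int vec \<Rightarrow> 'c :: {banach, real_normed_div_algebra}"
  assumes "q \<noteq> 0" "0 \<le> a0" "0 \<le> a1" "0 \<le> a2"
    and "(\<lambda>\<mu>. of_nat (w \<mu>) * B \<mu>) abs_summable_on carrier_vec n"
    and "\<And>\<mu>. \<mu> \<in> carrier_vec n \<Longrightarrow>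
      int (w \<mu>) = a0 + a1 * of_bool (\<forall>k<n. q dvd \<mu> $ k) + a2 * of_bool (\<forall>k<n. q ^ 2 dvd \<mu> $ k)"
  shows "(\<Sum>\<^sub>\<infinity>\<mu>\<in>carrier_vec n. of_nat (w \<mu>) * B \<mu>)
    = of_int a0 * (\<Sum>\<^sub>\<infinity>v\<in>carrier_vec n. B v)
    + of_int a1 * (\<Sum>\<^sub>\<infinity>v\<in>carrier_vec n. B (q \<cdot>\<^sub>v v))
    + of_int a2 * (\<Sum>\<^sub>\<infinity>v\<in>carrier_vec n. B (q ^ 2 \<cdot>\<^sub>v v))"
proof -
  let ?V = "carrier_vec n :: int vec set"
  let ?w1 = "\<lambda>\<mu>. a1 * of_bool (\<forall>k<n. q dvd \<mu> $ k)" and ?w2 = "\<lambda>\<mu>. a2 * of_bool (\<forall>k<n. q ^ 2 dvd \<mu> $ k)"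
  have weight: "of_nat (w \<mu>) = (of_int ((a0 + ?w1 \<mu>) + ?w2 \<mu>) :: 'c)" if "\<mu> \<in> ?V" for \<mu>
    using arg_cong[OF assms(6)[OF that], of "of_int :: int \<Rightarrow> 'c"] by simp
  have "(\<lambda>\<mu>. of_int ((a0 + ?w1 \<mu>) + ?w2 \<mu>) * B \<mu>) abs_summable_on ?V"
    using assms(5) by (rule summable_on_cong[THEN iffD1, rotated]) (simp add: weight)
  note split2 = infsum_add_nonneg_weights[OF this]
  note split1 = infsum_add_nonneg_weights[OF split2(1)]
  have "(\<Sum>\<^sub>\<infinity>\<mu>\<in>?V. of_nat (w \<mu>) * B \<mu>) = (\<Sum>\<^sub>\<infinity>\<mu>\<in>?V. of_int ((a0 + ?w1 \<mu>) + ?w2 \<mu>) * B \<mu>)"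
    by (rule infsum_cong) (simp add: weight)
  also have "\<dots> = (\<Sum>\<^sub>\<infinity>\<mu>\<in>?V. of_int a0 * B \<mu>) + (\<Sum>\<^sub>\<infinity>\<mu>\<in>?V. of_int (?w1 \<mu>) * B \<mu>)
      + (\<Sum>\<^sub>\<infinity>\<mu>\<in>?V. of_int (?w2 \<mu>) * B \<mu>)"
    using split2(2) split1(2) assms(2-4) by simp
  finally show ?thesis
    using infsum_smult_vec[where q = q and n = n and B = B]
      infsum_smult_vec[where q = "q ^ 2" and n = n and B = B] assms(1)
    by (simp add: infsum_of_bool_weight infsum_cmult_right')
qed

lemma lattice_sums_eq_infsum_count:
  fixes B :: "int vec \<Rightarrow> 'c :: {banach, real_normed_div_algebra}"
  assumes "p > 0"
    and "\<forall>C \<in> cosets (Hgrp n p i j) (GLZ n).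
           (\<lambda>v. B (transpose_mat (rep C) *\<^sub>v v)) abs_summable_on (L0 n p i j)"
  defines "N \<mu> \<equiv> card {C \<in> cosets (Hgrp n p i j) (GLZ n). \<mu> \<in> lattice_image n p i j (rep C)}"
  shows "(\<lambda>\<mu>. of_nat (N \<mu>) * B \<mu>) abs_summable_on carrier_vec n"
    and "(\<Sum>C \<in> cosets (Hgrp n p i j) (GLZ n). \<Sum>\<^sub>\<infinity>v \<in> L0 n p i j. B (transpose_mat (rep C) *\<^sub>v v))
       = (\<Sum>\<^sub>\<infinity>\<mu>\<in>carrier_vec n. of_nat (N \<mu>) * B \<mu>)"
proof -
  let ?T = "cosets (Hgrp n p i j) (GLZ n)"
  have rep: "transpose_mat (rep C) \<in> GLZ n" if "C \<in> ?T" for C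
    using GLZ_transpose[OF rep_GLZ[OF that]] .
  have inj: "inj_on (\<lambda>v. transpose_mat (rep C) *\<^sub>v v) (L0 n p i j)" if "C \<in> ?T" for C
  proof (rule inj_onI)
    fix x y assume "x \<in> L0 n p i j" "y \<in> L0 n p i j"
      "transpose_mat (rep C) *\<^sub>v x = transpose_mat (rep C) *\<^sub>v y"
    then show "x = y"
      using GLZ_mult_vec_inj[OF rep[OF that]] L0_carrier by blast
  qed
  have image: "(\<lambda>v. transpose_mat (rep C) *\<^sub>v v) ` L0 n p i j \<subseteq> carrier_vec n" if "C \<in> ?T" for C
    using lattice_image_carrier[OF GLZ_carrier[OF rep_GLZ[OF that]]] unfolding lattice_image_def .
  note sums = sum_infsum_eq_infsum_count[where \<phi> = "\<lambda>C v. transpose_mat (rep C) *\<^sub>v v",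
      OF finite_cosets_Hgrp[OF assms(1)] inj image assms(2)[rule_format]]
  show "(\<lambda>\<mu>. of_nat (N \<mu>) * B \<mu>) abs_summable_on carrier_vec n"
    using sums(1) unfolding N_def lattice_image_def .
  show "(\<Sum>C \<in> ?T. \<Sum>\<^sub>\<infinity>v \<in> L0 n p i j. B (transpose_mat (rep C) *\<^sub>v v))
       = (\<Sum>\<^sub>\<infinity>\<mu>\<in>carrier_vec n. of_nat (N \<mu>) * B \<mu>)"
    using sums(2) unfolding N_def lattice_image_def .
qed

theorem lemma3p7:
  fixes n p i j :: nat and B :: "int vec \<Rightarrow> complex"
  assumes "n \<ge> 1" and "prime p" and "i \<le> j" and "j \<le> n"
    and "\<forall>C \<in> cosets (Hgrp n p i j) (GLZ n).
           (\<lambda>v. B (transpose_mat (rep C) *\<^sub>v v)) abs_summable_on (L0 n p i j)"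
  shows "\<exists>a0 a1 a2 :: int.
     a0 + a1 + a2 = int (card (cosets (Hgrp n p i j) (GLZ n))) \<and>
     a0 + a1 = int (card (cosets (Hgrp n p i j) (S1 n p i))) \<and>
     a0 = int (card (cosets (Hgrp n p i j) (S2 n p i j))) \<and>
     (\<Sum>C \<in> cosets (Hgrp n p i j) (GLZ n).
        \<Sum>\<^sub>\<infinity>v \<in> L0 n p i j. B (transpose_mat (rep C) *\<^sub>v v))
     = of_int a0 * (\<Sum>\<^sub>\<infinity>v \<in> carrier_vec n. B v)
     + of_int a1 * (\<Sum>\<^sub>\<infinity>v \<in> carrier_vec n. B (int p \<cdot>\<^sub>v v))
     + of_int a2 * (\<Sum>\<^sub>\<infinity>v \<in> carrier_vec n. B (int p ^ 2 \<cdot>\<^sub>v v))"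
proof -
  define c c1 c2 where "c = card (cosets (Hgrp n p i j) (GLZ n))"
    and "c1 = card (cosets (Hgrp n p i j) (S1 n p i))" and "c2 = card (cosets (Hgrp n p i j) (S2 n p i j))"
  have p: "p > 0"
    using assms(2) prime_gt_0_nat by blast
  have "c2 \<le> c1"
    unfolding c1_def c2_def by (rule card_cosets_mono[OF p S2_subset_S1 S1_subset_GLZ])
  moreover have "c1 \<le> c"
    unfolding c_def c1_def by (rule card_cosets_mono[OF p S1_subset_GLZ order_refl])
  moreover have "int (card {C \<in> cosets (Hgrp n p i j) (GLZ n). \<mu> \<in> lattice_image n p i j (rep C)})
      = int c2 + (int c1 - int c2) * of_bool (\<forall>k<n. int p dvd \<mu> $ k)
      + (int c - int c1) * of_bool (\<forall>k<n. int p ^ 2 dvd \<mu> $ k)" if "\<mu> \<in> carrier_vec n" for \<mu>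
    using card_cosets_lattice_image_containing[OF assms(2,1,3,4) that]
    unfolding c_def c1_def c2_def by (auto simp: power2_eq_square dvd_mult_left)
  ultimately have "(\<Sum>C \<in> cosets (Hgrp n p i j) (GLZ n). \<Sum>\<^sub>\<infinity>v \<in> L0 n p i j. B (transpose_mat (rep C) *\<^sub>v v))
     = of_int (int c2) * (\<Sum>\<^sub>\<infinity>v \<in> carrier_vec n. B v)
     + of_int (int c1 - int c2) * (\<Sum>\<^sub>\<infinity>v \<in> carrier_vec n. B (int p \<cdot>\<^sub>v v))
     + of_int (int c - int c1) * (\<Sum>\<^sub>\<infinity>v \<in> carrier_vec n. B (int p ^ 2 \<cdot>\<^sub>v v))"
    unfolding lattice_sums_eq_infsum_count(2)[OF p assms(5)]
    using p by (intro infsum_divisibility_weights lattice_sums_eq_infsum_count(1)[OF p assms(5)]) auto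
  then show ?thesis
    unfolding c_def[symmetric] c1_def[symmetric] c2_def[symmetric]
    by (intro exI[of _ "int c2"] exI[of _ "int c1 - int c2"] exI[of _ "int c - int c1"]) simp
qed

end
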